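(* Let $a,b\in\mathbb{C}$ and let $E:\mathscr{A}(\mathbb{R})\to\mathscr{A}(\mathbb{R})$ be the first order Euler differential operator $Ef(x)=axf'(x)+bf(x)$. Then $E$ generates a $C_0$-semigroup on $\mathscr{A}(\mathbb{R})$ if and only if $a\in\mathbb{R}$.
   Context: $\mathscr{A}(\mathbb{R})$ denotes the space of real analytic functions on $\mathbb{R}$ with the inductive limit topology $\operatorname{ind}_{U\supset\mathbb{R}}H(U)$ ($U$ complex open neighbourhoods of $\mathbb{R}$, $H(U)$ with compact-open topology). A $C_0$-semigroup is a family $(T_t)_{t\ge0}$ of continuous linear operators on $\mathscr{A}(\mathbb{R})$ with $T_tT_s=T_{t+s}$, $T_0=I$, and $t\mapsto T_tf$ continuous for each $f$; its generator is $Af=\lim_{t\to0^+}(T_tf-f)/t$ on the domain where the limit exists; "$E$ generates" means $E$ (with domain $\mathscr{A}(\mathbb{R})$) is the generator. *)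

theory Defs
  imports "HOL-Analysis.Analysis"
begin

definition real_analytic_fun :: "(real \<Rightarrow> complex) \<Rightarrow> bool" where
  "real_analytic_fun f \<longleftrightarrow>
     (\<exists>U g. open U \<and> range complex_of_real \<subseteq> U \<and> g holomorphic_on U \<and>
            (\<forall>x. g (complex_of_real x) = f x))"

definition AR :: "(real \<Rightarrow> complex) set" where
  "AR = {f. real_analytic_fun f}"

text \<open>Zero neighbourhoods of the locally convex inductive limit topology
ind_{U} H(U): absolutely convex subsets V of A(R) whose preimage under the
restriction map H(U) -> A(R) is a zero neighbourhood of H(U) (compact-open
topology) for every open U containing the real axis.\<close>

definition AR_zero_nbhd :: "(real \<Rightarrow> complex) set \<Rightarrow> bool" where
  "AR_zero_nbhd V \<longleftrightarrow>
     V \<subseteq> AR \<and>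
     (\<forall>f\<in>V. \<forall>g\<in>V. \<forall>u::real. 0 \<le> u \<and> u \<le> 1 \<longrightarrow>
         (\<lambda>x. complex_of_real u * f x + complex_of_real (1 - u) * g x) \<in> V) \<and>
     (\<forall>f\<in>V. \<forall>c::complex. cmod c \<le> 1 \<longrightarrow> (\<lambda>x. c * f x) \<in> V) \<and>
     (\<forall>U. open U \<and> range complex_of_real \<subseteq> U \<longrightarrow>
        (\<exists>K \<epsilon>. compact K \<and> K \<subseteq> U \<and> \<epsilon> > 0 \<and>
           (\<forall>g. g holomorphic_on U \<and> (\<forall>z\<in>K. cmod (g z) < \<epsilon>) \<longrightarrow>
                 (\<lambda>x. g (complex_of_real x)) \<in> V)))"

text \<open>Convergence in A(R) along a filter (the sets L + V form a neighbourhood base at L).\<close>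

definition AR_tendsto :: "('b \<Rightarrow> real \<Rightarrow> complex) \<Rightarrow> (real \<Rightarrow> complex) \<Rightarrow> 'b filter \<Rightarrow> bool" where
  "AR_tendsto F L net \<longleftrightarrow>
     (\<forall>V. AR_zero_nbhd V \<longrightarrow> eventually (\<lambda>t. (\<lambda>x. F t x - L x) \<in> V) net)"

definition AR_continuous_linear :: "((real \<Rightarrow> complex) \<Rightarrow> (real \<Rightarrow> complex)) \<Rightarrow> bool" where
  "AR_continuous_linear T \<longleftrightarrow>
     (\<forall>f\<in>AR. T f \<in> AR) \<and>
     (\<forall>f\<in>AR. \<forall>g\<in>AR. T (\<lambda>x. f x + g x) = (\<lambda>x. T f x + T g x)) \<and>
     (\<forall>f\<in>AR. \<forall>c::complex. T (\<lambda>x. c * f x) = (\<lambda>x. c * T f x)) \<and>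
     (\<forall>f\<in>AR. \<forall>V. AR_zero_nbhd V \<longrightarrow>
        (\<exists>W. AR_zero_nbhd W \<and> (\<forall>h\<in>W. (\<lambda>x. T (\<lambda>y. f y + h y) x - T f x) \<in> V)))"

definition C0_semigroup :: "(real \<Rightarrow> (real \<Rightarrow> complex) \<Rightarrow> (real \<Rightarrow> complex)) \<Rightarrow> bool" where
  "C0_semigroup T \<longleftrightarrow>
     (\<forall>t\<ge>0. AR_continuous_linear (T t)) \<and>
     (\<forall>t\<ge>0. \<forall>s\<ge>0. \<forall>f\<in>AR. T t (T s f) = T (t + s) f) \<and>
     (\<forall>f\<in>AR. T 0 f = f) \<and>
     (\<forall>f\<in>AR. \<forall>t0\<ge>0. AR_tendsto (\<lambda>t. T t f) (T t0 f) (at t0 within {0..}))"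

text \<open>The generator of T has domain A(R) and equals E there: for every f in A(R)
the limit of (T_t f - f)/t as t -> 0+ exists in A(R) and equals E f.\<close>

definition generates_C0 :: "((real \<Rightarrow> complex) \<Rightarrow> (real \<Rightarrow> complex)) \<Rightarrow> bool" where
  "generates_C0 E \<longleftrightarrow>
     (\<exists>T. C0_semigroup T \<and>
        (\<forall>f\<in>AR. AR_tendsto (\<lambda>t. (\<lambda>x. (T t f x - f x) / complex_of_real t)) (E f) (at_right 0)))"

definition euler_op :: "complex \<Rightarrow> complex \<Rightarrow> (real \<Rightarrow> complex) \<Rightarrow> (real \<Rightarrow> complex)" where
  "euler_op a b f = (\<lambda>x. a * complex_of_real x * vector_derivative f (at x) + b * f x)"

end

theory Submission
  imports Defs "HOL-Complex_Analysis.Cauchy_Integral_Formula" "HOL-Computational_Algebra.Polynomial"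
begin

text \<open>
  On monomials the Euler operator is diagonal, \<open>E x\<^sup>n = (a n + b) x\<^sup>n\<close>. Since the orbit
  \<open>t \<mapsto> T\<^sub>t x\<^sup>n\<close> of a semigroup generated by \<open>E\<close> is only known to be right
  differentiable, uniqueness for \<open>\<phi>' = (a n + b) \<phi>\<close> is proved for one-sided derivatives;
  it gives \<open>T\<^sub>t p (x) = e\<^sup>b\<^sup>t p (e\<^sup>a\<^sup>t x)\<close> for every polynomial \<open>p\<close>.
  If \<open>a\<close> is not real there are \<open>t \<ge> 0\<close> and a real \<open>x\<^sub>0\<close> with \<open>(e\<^sup>a\<^sup>t x\<^sub>0)\<^sup>2 = -2\<close>.
  The polynomials \<open>(1 - (1 + z\<^sup>2) / N)\<^sup>2\<^sup>j\<close> tend to zero uniformly on compact subsets of the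
  strip \<open>\<bar>Im z\<bar> < 1/2\<close>, hence in \<open>A(\<real>)\<close>, while the values of their images under \<open>T\<^sub>t\<close>
  at \<open>x\<^sub>0\<close> have modulus \<open>\<bar>e\<^sup>b\<^sup>t\<bar> (1 + 1/N)\<^sup>2\<^sup>j \<ge> \<bar>e\<^sup>b\<^sup>t\<bar>\<close>, contradicting the
  continuity of \<open>T\<^sub>t\<close>. For real \<open>a\<close> the weighted dilations \<open>f \<mapsto> e\<^sup>b\<^sup>t f (e\<^sup>a\<^sup>t \<cdot>)\<close>
  form the semigroup; every convergence in \<open>A(\<real>)\<close> it requires is uniform convergence on
  compact subsets of one fixed complex neighbourhood of the real line.
\<close>

section \<open>Holomorphic extensions and zero neighbourhoods of \<open>A(\<real>)\<close>\<close>

lemma AR_holomorphic_restriction: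
  assumes "open U" "range complex_of_real \<subseteq> U" "g holomorphic_on U"
  shows "(\<lambda>x. g (complex_of_real x)) \<in> AR"
  using assms unfolding AR_def real_analytic_fun_def by blast

lemma AR_holomorphic_extension:
  assumes "f \<in> AR"
  obtains U g where "open U" "range complex_of_real \<subseteq> U" "g holomorphic_on U"
    "f = (\<lambda>x. g (complex_of_real x))"
  using assms unfolding AR_def real_analytic_fun_def by fastforce

lemma AR_entire:
  assumes "g holomorphic_on UNIV"
  shows "(\<lambda>x. g (complex_of_real x)) \<in> AR"
  using assms by (intro AR_holomorphic_restriction) auto

lemma AR_zero [simp]: "(\<lambda>x. 0) \<in> AR"
  using AR_entire[of "\<lambda>z. 0"] by simp

lemma AR_add:
  assumes "f \<in> AR" "g \<in> AR"
  shows "(\<lambda>x. f x + g x) \<in> AR"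
proof -
  obtain U1 g1 where 1: "open U1" "range complex_of_real \<subseteq> U1" "g1 holomorphic_on U1"
    "f = (\<lambda>x. g1 (complex_of_real x))" using AR_holomorphic_extension[OF assms(1)] .
  obtain U2 g2 where 2: "open U2" "range complex_of_real \<subseteq> U2" "g2 holomorphic_on U2"
    "g = (\<lambda>x. g2 (complex_of_real x))" using AR_holomorphic_extension[OF assms(2)] .
  have "(\<lambda>x. g1 (complex_of_real x) + g2 (complex_of_real x)) \<in> AR"
    using 1 2 by (intro AR_holomorphic_restriction[of "U1 \<inter> U2"])
      (auto intro!: holomorphic_intros elim: holomorphic_on_subset)
  then show ?thesis using 1 2 by simp
qed

lemma AR_cmult:
  assumes "f \<in> AR"
  shows "(\<lambda>x. c * f x) \<in> AR"
proof -
  obtain U g where "open U" "range complex_of_real \<subseteq> U" "g holomorphic_on U"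
    "f = (\<lambda>x. g (complex_of_real x))" using AR_holomorphic_extension[OF assms] .
  then show ?thesis
    by (auto intro!: AR_holomorphic_restriction[of U "\<lambda>z. c * g z"] holomorphic_intros)
qed

lemma AR_sum:
  assumes "finite S" "\<And>k. k \<in> S \<Longrightarrow> f k \<in> AR"
  shows "(\<lambda>x. \<Sum>k\<in>S. f k x) \<in> AR"
  using assms by (induction S rule: finite_induct) (auto intro: AR_add)

lemma AR_vector_derivative:
  assumes "open U" "range complex_of_real \<subseteq> U" "g holomorphic_on U"
  shows "vector_derivative (\<lambda>x. g (complex_of_real x)) (at x) = deriv g (complex_of_real x)"
proof -
  have "complex_of_real x \<in> U" using assms(2) by auto
  from has_vector_derivative_real_field[OF holomorphic_derivI[OF assms(3,1) this]]
  show ?thesis by (intro vector_derivative_at) simp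
qed

lemma AR_zero_nbhdE:
  assumes "AR_zero_nbhd V" "open U" "range complex_of_real \<subseteq> U"
  obtains K \<epsilon> where "compact K" "K \<subseteq> U" "\<epsilon> > 0"
    "\<And>g. g holomorphic_on U \<Longrightarrow> (\<forall>z\<in>K. cmod (g z) < \<epsilon>) \<Longrightarrow> (\<lambda>x. g (complex_of_real x)) \<in> V"
  using assms unfolding AR_zero_nbhd_def by meson

lemma AR_zero_nbhd_convex:
  "AR_zero_nbhd V \<Longrightarrow> f \<in> V \<Longrightarrow> g \<in> V \<Longrightarrow> 0 \<le> u \<Longrightarrow> u \<le> 1 \<Longrightarrow>
    (\<lambda>x. complex_of_real u * f x + complex_of_real (1 - u) * g x) \<in> V"
  unfolding AR_zero_nbhd_def by blast

lemma AR_zero_nbhd_balanced: "AR_zero_nbhd V \<Longrightarrow> f \<in> V \<Longrightarrow> cmod c \<le> 1 \<Longrightarrow> (\<lambda>x. c * f x) \<in> V"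
  unfolding AR_zero_nbhd_def by blast

lemma AR_zero_nbhd_point_eval:
  assumes "e > 0"
  shows "AR_zero_nbhd {f \<in> AR. cmod (f x0) < e}"
  unfolding AR_zero_nbhd_def
proof (intro conjI ballI allI impI)
  fix f g and u :: real
  assume f: "f \<in> {f \<in> AR. cmod (f x0) < e}" and g: "g \<in> {f \<in> AR. cmod (f x0) < e}"
    and u: "0 \<le> u \<and> u \<le> 1"
  have "cmod (complex_of_real u * f x0 + complex_of_real (1 - u) * g x0)
      \<le> cmod (complex_of_real u * f x0) + cmod (complex_of_real (1 - u) * g x0)"
    by (rule norm_triangle_ineq)
  also have "\<dots> = u * cmod (f x0) + (1 - u) * cmod (g x0)"
    using u by (simp add: norm_mult del: of_real_diff)
  also have "\<dots> < e"
    using f g u by (intro convex_bound_lt) auto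
  finally show "(\<lambda>x. complex_of_real u * f x + complex_of_real (1 - u) * g x) \<in> {f \<in> AR. cmod (f x0) < e}"
    using f g by (auto intro!: AR_add AR_cmult)
next
  fix f and c :: complex
  assume "f \<in> {f \<in> AR. cmod (f x0) < e}" and "cmod c \<le> 1"
  then show "(\<lambda>x. c * f x) \<in> {f \<in> AR. cmod (f x0) < e}"
    by (auto intro!: AR_cmult simp: norm_mult intro: le_less_trans[OF mult_left_le_one_le])
next
  fix U :: "complex set"
  assume "open U \<and> range complex_of_real \<subseteq> U"
  then show "\<exists>K \<epsilon>. compact K \<and> K \<subseteq> U \<and> 0 < \<epsilon> \<and>
      (\<forall>g. g holomorphic_on U \<and> (\<forall>z\<in>K. cmod (g z) < \<epsilon>) \<longrightarrow>
        (\<lambda>x. g (complex_of_real x)) \<in> {f \<in> AR. cmod (f x0) < e})"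
    using assms by (intro exI[of _ "{complex_of_real x0}"] exI[of _ e])
      (auto intro: AR_holomorphic_restriction)
qed auto

lemma AR_tendsto_pointwise:
  assumes "AR_tendsto F L net"
  shows "((\<lambda>t. F t x0) \<longlongrightarrow> L x0) net"
proof (rule tendstoI)
  fix e :: real
  assume "e > 0"
  with assms have "eventually (\<lambda>t. (\<lambda>x. F t x - L x) \<in> {f \<in> AR. cmod (f x0) < e}) net"
    using AR_zero_nbhd_point_eval unfolding AR_tendsto_def by blast
  then show "eventually (\<lambda>t. dist (F t x0) (L x0) < e) net"
    by (rule eventually_mono) (auto simp: dist_norm)
qed

lemma AR_tendsto_if_uniform_limit_on_compacts:
  assumes "open U" "range complex_of_real \<subseteq> U" "G0 holomorphic_on U"
    and "eventually (\<lambda>t. G t holomorphic_on U \<and> F t = (\<lambda>x. G t (complex_of_real x))) net"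
    and "L = (\<lambda>x. G0 (complex_of_real x))"
    and "\<And>K. compact K \<Longrightarrow> K \<subseteq> U \<Longrightarrow> uniform_limit K G G0 net"
  shows "AR_tendsto F L net"
  unfolding AR_tendsto_def
proof (intro allI impI)
  fix V
  assume "AR_zero_nbhd V"
  then obtain K \<epsilon> where K: "compact K" "K \<subseteq> U" "\<epsilon> > 0" and KV: "\<And>g. g holomorphic_on U \<Longrightarrow>
      (\<forall>z\<in>K. cmod (g z) < \<epsilon>) \<Longrightarrow> (\<lambda>x. g (complex_of_real x)) \<in> V"
    using AR_zero_nbhdE assms(1,2) by metis
  have "eventually (\<lambda>t. \<forall>z\<in>K. dist (G t z) (G0 z) < \<epsilon>) net"
    using uniform_limitD[OF assms(6)[OF K(1,2)] K(3)] .
  with assms(4) show "eventually (\<lambda>t. (\<lambda>x. F t x - L x) \<in> V) net"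
  proof eventually_elim
    case (elim t)
    then have "(\<lambda>x. G t (complex_of_real x) - G0 (complex_of_real x)) \<in> V"
      using assms(3) by (intro KV[of "\<lambda>z. G t z - G0 z"]) (auto intro: holomorphic_intros simp: dist_norm)
    then show ?case using elim assms(5) by simp
  qed
qed

section \<open>Continuous linear operators on \<open>A(\<real>)\<close>\<close>

lemma AR_continuous_linear_in_AR: "AR_continuous_linear T \<Longrightarrow> f \<in> AR \<Longrightarrow> T f \<in> AR"
  unfolding AR_continuous_linear_def by blast

lemma AR_continuous_linear_add:
  "AR_continuous_linear T \<Longrightarrow> f \<in> AR \<Longrightarrow> g \<in> AR \<Longrightarrow> T (\<lambda>x. f x + g x) = (\<lambda>x. T f x + T g x)"
  unfolding AR_continuous_linear_def by blast

lemma AR_continuous_linear_cmult: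
  "AR_continuous_linear T \<Longrightarrow> f \<in> AR \<Longrightarrow> T (\<lambda>x. c * f x) = (\<lambda>x. c * T f x)"
  unfolding AR_continuous_linear_def by blast

lemma AR_continuous_linear_zero: "AR_continuous_linear T \<Longrightarrow> T (\<lambda>x. 0) = (\<lambda>x. 0)"
  using AR_continuous_linear_cmult[of T "\<lambda>x. 0" 0] by simp

lemma AR_continuous_linear_sum:
  assumes "AR_continuous_linear T" "finite S" "\<And>k. k \<in> S \<Longrightarrow> f k \<in> AR"
  shows "T (\<lambda>x. \<Sum>k\<in>S. f k x) = (\<lambda>x. \<Sum>k\<in>S. T (f k) x)"
  using assms(2,3)
proof (induction S rule: finite_induct)
  case empty
  then show ?case using AR_continuous_linear_zero[OF assms(1)] by simp
next
  case (insert k S)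
  then show ?case
    using AR_continuous_linear_add[OF assms(1), of "f k" "\<lambda>x. \<Sum>k\<in>S. f k x"] AR_sum[of S f] by simp
qed

lemma AR_continuous_linear_tendsto:
  assumes "AR_continuous_linear T" "L \<in> AR" "AR_tendsto F L net"
  shows "AR_tendsto (\<lambda>s. T (F s)) (T L) net"
  unfolding AR_tendsto_def
proof (intro allI impI)
  fix V
  assume "AR_zero_nbhd V"
  then obtain W where W: "AR_zero_nbhd W"
    and WV: "\<And>h. h \<in> W \<Longrightarrow> (\<lambda>x. T (\<lambda>y. L y + h y) x - T L x) \<in> V"
    using assms(1,2) unfolding AR_continuous_linear_def by metis
  have "eventually (\<lambda>s. (\<lambda>x. F s x - L x) \<in> W) net"
    using assms(3) W unfolding AR_tendsto_def by blast
  then show "eventually (\<lambda>s. (\<lambda>x. T (F s) x - T L x) \<in> V) net"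
    by (rule eventually_mono) (drule WV, simp)
qed

lemma AR_continuous_linear_zero_nbhd:
  assumes "AR_continuous_linear T" "AR_zero_nbhd V"
  obtains W where "AR_zero_nbhd W" "\<And>h. h \<in> W \<Longrightarrow> T h \<in> V"
proof -
  have "\<forall>f\<in>AR. \<forall>V. AR_zero_nbhd V \<longrightarrow>
      (\<exists>W. AR_zero_nbhd W \<and> (\<forall>h\<in>W. (\<lambda>x. T (\<lambda>y. f y + h y) x - T f x) \<in> V))"
    using assms(1) unfolding AR_continuous_linear_def by blast
  from this[rule_format, OF AR_zero assms(2)] obtain W where "AR_zero_nbhd W"
    and "\<forall>h\<in>W. (\<lambda>x. T (\<lambda>y. 0 + h y) x - T (\<lambda>y. 0) x) \<in> V"
    by auto
  then show thesis using that AR_continuous_linear_zero[OF assms(1)] by simp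
qed

section \<open>Right derivatives\<close>

lemma Icc_subset_closed_if_right_extensible:
  fixes C :: "real set"
  assumes "closed C" "a \<in> C"
    and step: "\<And>s. s \<in> C \<Longrightarrow> a \<le> s \<Longrightarrow> s < b \<Longrightarrow> \<exists>d>0. {s..s + d} \<subseteq> C"
  shows "{a..b} \<subseteq> C"
proof (cases "a \<le> b")
  case True
  define B where "B = {s. a \<le> s \<and> s \<le> b \<and> {a..s} \<subseteq> C}"
  have aB: "a \<in> B" using True assms(2) by (auto simp: B_def)
  have bdd: "bdd_above B" by (auto simp: B_def bdd_above_def)
  define \<sigma> where "\<sigma> = Sup B"
  have a\<sigma>: "a \<le> \<sigma>" unfolding \<sigma>_def using aB bdd by (rule cSup_upper)
  have \<sigma>b: "\<sigma> \<le> b" unfolding \<sigma>_def using aB by (intro cSup_least) (auto simp: B_def)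
  have "{a..<\<sigma>} \<subseteq> C"
  proof
    fix r
    assume r: "r \<in> {a..<\<sigma>}"
    then obtain s where "s \<in> B" "r < s"
      using less_cSup_iff[OF _ bdd] aB by (auto simp: \<sigma>_def)
    then show "r \<in> C" using r by (auto simp: B_def)
  qed
  have \<sigma>C: "{a..\<sigma>} \<subseteq> C"
  proof (cases "a = \<sigma>")
    case False
    then have "closure {a..<\<sigma>} = {a..\<sigma>}" using a\<sigma> by (intro closure_atLeastLessThan) auto
    then show ?thesis using closure_minimal[OF \<open>{a..<\<sigma>} \<subseteq> C\<close> assms(1)] by simp
  qed (use assms(2) in simp)
  have "\<sigma> = b"
  proof (rule ccontr)
    assume "\<sigma> \<noteq> b"
    then obtain d where d: "d > 0" "{\<sigma>..\<sigma> + d} \<subseteq> C"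
      using step[of \<sigma>] \<sigma>C a\<sigma> \<sigma>b by force
    define s where "s = min b (\<sigma> + d)"
    have "{a..s} \<subseteq> {a..\<sigma>} \<union> {\<sigma>..\<sigma> + d}" by (auto simp: s_def)
    then have "{a..s} \<subseteq> C" using \<sigma>C d by blast
    then have "s \<in> B" using a\<sigma> \<sigma>b d by (auto simp: B_def s_def)
    then have "s \<le> \<sigma>" unfolding \<sigma>_def using bdd by (rule cSup_upper)
    then show False using \<open>\<sigma> \<noteq> b\<close> \<sigma>b d by (auto simp: s_def)
  qed
  then show ?thesis using \<sigma>C by simp
qed simp

lemma right_derivative_zero_imp_norm_diff_le:
  fixes g :: "real \<Rightarrow> 'a::real_normed_vector"
  assumes "a \<le> b" "continuous_on {a..b} g" "e > 0"
    and der: "\<And>s. a \<le> s \<Longrightarrow> s < b \<Longrightarrow> (g has_vector_derivative 0) (at s within {s..})"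
  shows "norm (g b - g a) \<le> e * (b - a)"
proof -
  define C where "C = {a..b} \<inter> (\<lambda>r. norm (g r - g a) - e * (r - a)) -` {..0}"
  have "closed C"
    unfolding C_def by (intro continuous_closed_preimage continuous_intros assms)
  moreover have "a \<in> C" using assms(1) by (simp add: C_def)
  moreover have "\<exists>d>0. {s..s + d} \<subseteq> C" if s: "s \<in> C" "s < b" for s
  proof -
    have "(g has_derivative (\<lambda>h. h *\<^sub>R 0)) (at s within {s..})"
      using der[of s] s by (simp add: C_def has_vector_derivative_def)
    then obtain d where "d > 0"
      and d: "\<forall>y\<in>{s..}. norm (y - s) < d \<longrightarrow> norm (g y - g s - (y - s) *\<^sub>R 0) \<le> e * norm (y - s)"
      using \<open>e > 0\<close> unfolding has_derivative_within_alt by blast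
    have "r \<in> C" if "s \<le> r" "r \<le> s + min (d / 2) (b - s)" for r
    proof -
      have "norm (g r - g a) \<le> norm (g r - g s) + norm (g s - g a)"
        using norm_triangle_ineq[of "g r - g s" "g s - g a"] by simp
      also have "\<dots> \<le> e * (r - s) + e * (s - a)"
        using d s that \<open>d > 0\<close> by (intro add_mono) (auto simp: C_def)
      finally show ?thesis using s that by (auto simp: C_def algebra_simps)
    qed
    then show ?thesis using \<open>d > 0\<close> s by (intro exI[of _ "min (d / 2) (b - s)"]) auto
  qed
  ultimately have "b \<in> C"
    using Icc_subset_closed_if_right_extensible[of C a b] assms(1) by (auto simp: C_def)
  then show ?thesis by (simp add: C_def)
qed

lemma right_derivative_zero_imp_constant:
  fixes g :: "real \<Rightarrow> 'a::real_normed_vector"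
  assumes "a \<le> b" "continuous_on {a..b} g"
    and "\<And>s. a \<le> s \<Longrightarrow> s < b \<Longrightarrow> (g has_vector_derivative 0) (at s within {s..})"
  shows "g b = g a"
proof (rule ccontr)
  assume "g b \<noteq> g a"
  then have "norm (g b - g a) > 0" by simp
  with right_derivative_zero_imp_norm_diff_le[OF assms(1,2) _ assms(3), of "norm (g b - g a) / (b - a + 1)"]
    assms(1)
  show False by (simp add: field_simps)
qed

lemma has_vector_derivative_right_if_difference_quotient:
  fixes \<phi> :: "real \<Rightarrow> complex"
  assumes "((\<lambda>h. (\<phi> (s + h) - \<phi> s) / complex_of_real h) \<longlongrightarrow> D) (at_right 0)"
  shows "(\<phi> has_vector_derivative D) (at s within {s..})"
proof -
  have "((\<lambda>h. (\<phi> (s + h) - \<phi> s) / complex_of_real h - D) \<longlongrightarrow> 0) (at_right 0)"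
    using tendsto_diff[OF assms tendsto_const[of D]] by simp
  moreover have "eventually (\<lambda>h. (\<phi> (s + h) - \<phi> s) / complex_of_real h - D =
      (\<phi> (h + s) - \<phi> s - h *\<^sub>R D) /\<^sub>R norm (h + s - s)) (at_right 0)"
    by (rule eventually_mono[OF eventually_at_right_less])
      (simp add: scaleR_conv_of_real field_simps add.commute)
  ultimately have "((\<lambda>h. (\<phi> (h + s) - \<phi> s - h *\<^sub>R D) /\<^sub>R norm (h + s - s)) \<longlongrightarrow> 0) (at_right 0)"
    by (rule Lim_transform_eventually)
  then have "((\<lambda>y. (\<phi> y - \<phi> s - (y - s) *\<^sub>R D) /\<^sub>R norm (y - s)) \<longlongrightarrow> 0) (at_right s)"
    unfolding at_right_to_0[of s] filterlim_filtermap by (simp add: o_def)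
  then show ?thesis
    unfolding has_vector_derivative_def has_derivative_at_within at_within_Ici_at_right
    by (auto intro: bounded_linear_scaleR_left)
qed

lemma right_derivative_linear_ode_unique:
  fixes \<phi> :: "real \<Rightarrow> complex"
  assumes "t \<ge> 0" "continuous_on {0..t} \<phi>"
    and der: "\<And>s. 0 \<le> s \<Longrightarrow> s < t \<Longrightarrow> (\<phi> has_vector_derivative c * \<phi> s) (at s within {s..})"
  shows "\<phi> t = exp (c * complex_of_real t) * \<phi> 0"
proof -
  define \<psi> where "\<psi> s = exp (- c * complex_of_real s) * \<phi> s" for s
  have "\<psi> t = \<psi> 0"
  proof (rule right_derivative_zero_imp_constant[OF assms(1)])
    show "continuous_on {0..t} \<psi>" unfolding \<psi>_def by (intro continuous_intros assms(2))
  next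
    fix s
    assume s: "0 \<le> s" "s < t"
    have "((\<lambda>z. exp (- c * z)) has_field_derivative - c * exp (- c * complex_of_real s))
        (at (complex_of_real s))"
      by (auto intro!: derivative_eq_intros)
    from has_vector_derivative_real_field[OF this]
    have "((\<lambda>s. exp (- c * complex_of_real s)) has_vector_derivative - c * exp (- c * complex_of_real s))
        (at s within {s..})" .
    from has_vector_derivative_mult[OF this der[OF s]]
    show "(\<psi> has_vector_derivative 0) (at s within {s..})"
      unfolding \<psi>_def by (simp add: algebra_simps)
  qed
  then show ?thesis by (simp add: \<psi>_def exp_minus field_simps)
qed

section \<open>Semigroups generated by the Euler operator\<close>

locale AR_C0_semigroup =
  fixes T :: "real \<Rightarrow> (real \<Rightarrow> complex) \<Rightarrow> (real \<Rightarrow> complex)"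
  assumes C0: "C0_semigroup T"
begin

lemma continuous_linear: "t \<ge> 0 \<Longrightarrow> AR_continuous_linear (T t)"
  using C0 unfolding C0_semigroup_def by blast

lemma semigroup: "t \<ge> 0 \<Longrightarrow> s \<ge> 0 \<Longrightarrow> f \<in> AR \<Longrightarrow> T t (T s f) = T (t + s) f"
  using C0 unfolding C0_semigroup_def by blast

lemma identity: "f \<in> AR \<Longrightarrow> T 0 f = f"
  using C0 unfolding C0_semigroup_def by blast

lemma continuous_on_orbit_point: "f \<in> AR \<Longrightarrow> continuous_on {0..} (\<lambda>t. T t f x)"
  using C0 AR_tendsto_pointwise unfolding C0_semigroup_def continuous_on_def by blast

lemma difference_quotient_shift:
  assumes f: "f \<in> AR" and "s \<ge> 0" "h > 0"
  shows "T s (\<lambda>x. (T h f x - f x) / complex_of_real h) = (\<lambda>x. (T (s + h) f x - T s f x) / complex_of_real h)"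
proof -
  define c where "c = inverse (complex_of_real h)"
  have lin: "AR_continuous_linear (T s)" using \<open>s \<ge> 0\<close> by (rule continuous_linear)
  have Thf: "T h f \<in> AR" using assms by (simp add: AR_continuous_linear_in_AR continuous_linear)
  have "T s (\<lambda>x. (T h f x - f x) / complex_of_real h) = T s (\<lambda>x. c * T h f x + (- c) * f x)"
    by (simp add: c_def divide_inverse_commute right_diff_distrib)
  also have "\<dots> = (\<lambda>x. T s (\<lambda>x. c * T h f x) x + T s (\<lambda>x. (- c) * f x) x)"
    by (rule AR_continuous_linear_add[OF lin AR_cmult[OF Thf] AR_cmult[OF f]])
  also have "\<dots> = (\<lambda>x. c * T s (T h f) x + (- c) * T s f x)"
    by (simp only: AR_continuous_linear_cmult[OF lin Thf] AR_continuous_linear_cmult[OF lin f])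
  also have "\<dots> = (\<lambda>x. (T (s + h) f x - T s f x) / complex_of_real h)"
    using assms by (simp add: semigroup add.commute c_def field_simps)
  finally show ?thesis .
qed

lemma eigenvector:
  assumes f: "f \<in> AR" and "t \<ge> 0"
    and gen: "AR_tendsto (\<lambda>h x. (T h f x - f x) / complex_of_real h) (\<lambda>x. \<mu> * f x) (at_right 0)"
  shows "T t f x = exp (\<mu> * complex_of_real t) * f x"
proof -
  have "T t f x = exp (\<mu> * complex_of_real t) * T 0 f x"
  proof (rule right_derivative_linear_ode_unique[OF \<open>t \<ge> 0\<close>])
    show "continuous_on {0..t} (\<lambda>s. T s f x)"
      using continuous_on_orbit_point[OF f] by (rule continuous_on_subset) auto
  next
    fix s :: real
    assume "0 \<le> s"
    have "AR_tendsto (\<lambda>h. T s (\<lambda>x. (T h f x - f x) / complex_of_real h)) (T s (\<lambda>x. \<mu> * f x)) (at_right 0)"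
      by (rule AR_continuous_linear_tendsto[OF continuous_linear[OF \<open>0 \<le> s\<close>] AR_cmult[OF f] gen])
    from AR_tendsto_pointwise[OF this, of x]
    have "((\<lambda>h. T s (\<lambda>x. (T h f x - f x) / complex_of_real h) x) \<longlongrightarrow> \<mu> * T s f x) (at_right 0)"
      using AR_continuous_linear_cmult[OF continuous_linear f] \<open>0 \<le> s\<close> by simp
    moreover have "eventually (\<lambda>h. T s (\<lambda>x. (T h f x - f x) / complex_of_real h) x =
        (T (s + h) f x - T s f x) / complex_of_real h) (at_right 0)"
      using eventually_at_right_less by eventually_elim (simp add: difference_quotient_shift f \<open>0 \<le> s\<close>)
    ultimately show "((\<lambda>s. T s f x) has_vector_derivative \<mu> * T s f x) (at s within {s..})"
      by (intro has_vector_derivative_right_if_difference_quotient) (rule Lim_transform_eventually)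
  qed
  then show ?thesis using identity[OF f] by simp
qed

end

lemma euler_op_monomial:
  "euler_op a b (\<lambda>x. complex_of_real x ^ n) = (\<lambda>x. (a * of_nat n + b) * complex_of_real x ^ n)"
proof
  fix x :: real
  have "((\<lambda>z. z ^ n) has_field_derivative of_nat n * complex_of_real x ^ (n - 1)) (at (complex_of_real x))"
    by (auto intro!: derivative_eq_intros)
  from has_vector_derivative_real_field[OF this]
  have "vector_derivative (\<lambda>x. complex_of_real x ^ n) (at x) = of_nat n * complex_of_real x ^ (n - 1)"
    by (intro vector_derivative_at) simp
  moreover have "complex_of_real x * (of_nat n * complex_of_real x ^ (n - 1)) =
      of_nat n * complex_of_real x ^ n"
    by (cases n) auto
  ultimately show "euler_op a b (\<lambda>x. complex_of_real x ^ n) x = (a * of_nat n + b) * complex_of_real x ^ n"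
    unfolding euler_op_def by (simp add: algebra_simps)
qed

lemma AR_power: "(\<lambda>x. complex_of_real x ^ n) \<in> AR"
proof -
  have "(\<lambda>z. z ^ n) holomorphic_on UNIV" by (intro holomorphic_intros)
  then show ?thesis by (rule AR_entire)
qed

locale euler_C0_semigroup = AR_C0_semigroup +
  fixes a b :: complex
  assumes generator:
    "\<And>f. f \<in> AR \<Longrightarrow> AR_tendsto (\<lambda>t x. (T t f x - f x) / complex_of_real t) (euler_op a b f) (at_right 0)"
begin

lemma apply_monomial:
  assumes "t \<ge> 0"
  shows "T t (\<lambda>x. complex_of_real x ^ n) x0 = exp (b * t) * (exp (a * t) * complex_of_real x0) ^ n"
proof -
  have "AR_tendsto (\<lambda>t x. (T t (\<lambda>x. complex_of_real x ^ n) x - complex_of_real x ^ n) / complex_of_real t)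
      (\<lambda>x. (a * of_nat n + b) * complex_of_real x ^ n) (at_right 0)"
    using generator[OF AR_power] by (simp only: euler_op_monomial)
  from eigenvector[OF AR_power assms this]
  have "T t (\<lambda>x. complex_of_real x ^ n) x0 = exp ((a * of_nat n + b) * t) * complex_of_real x0 ^ n" .
  also have "\<dots> = exp (b * t) * (exp (a * t) * complex_of_real x0) ^ n"
    by (simp add: exp_add exp_of_nat_mult[symmetric] power_mult_distrib algebra_simps)
  finally show ?thesis .
qed

lemma apply_poly:
  assumes "t \<ge> 0"
  shows "T t (\<lambda>x. poly p (complex_of_real x)) x0 = exp (b * t) * poly p (exp (a * t) * complex_of_real x0)"
proof -
  have lin: "AR_continuous_linear (T t)" using assms by (rule continuous_linear)
  have "T t (\<lambda>x. poly p (complex_of_real x)) =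
      T t (\<lambda>x. \<Sum>i\<le>degree p. coeff p i * complex_of_real x ^ i)"
    by (simp only: poly_altdef)
  also have "\<dots> = (\<lambda>x. \<Sum>i\<le>degree p. T t (\<lambda>x. coeff p i * complex_of_real x ^ i) x)"
    by (rule AR_continuous_linear_sum[OF lin]) (auto intro: AR_cmult AR_power)
  also have "\<dots> = (\<lambda>x. \<Sum>i\<le>degree p. coeff p i * T t (\<lambda>x. complex_of_real x ^ i) x)"
    by (simp only: AR_continuous_linear_cmult[OF lin AR_power])
  finally show ?thesis
    using assms by (simp add: apply_monomial poly_altdef sum_distrib_left mult.left_commute)
qed

end

lemma norm_one_minus_div_le_on_strip:
  fixes z :: complex and M N :: real
  assumes "\<bar>Im z\<bar> < 1/2" "cmod (1 + z^2) \<le> M" "N \<ge> 2 * M^2 + 1"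
  shows "cmod (1 - (1 + z^2) / N) ^ 2 \<le> 1 - 1 / N"
proof -
  define u where "u = 1 + z^2"
  have "Im z ^ 2 < 1/4"
    using power_strict_mono[of "\<bar>Im z\<bar>" "1/2" 2] assms(1) by (simp add: power_divide)
  moreover have "Re u = 1 + Re z ^ 2 - Im z ^ 2" by (simp add: u_def power2_eq_square)
  ultimately have Re_u: "Re u \<ge> 3/4" using zero_le_power2[of "Re z"] by linarith
  have N: "N > 0" using assms(3) zero_le_power2[of M] by linarith
  have "Re u ^ 2 + Im u ^ 2 = cmod u ^ 2" by (simp add: cmod_power2)
  also have "\<dots> \<le> M ^ 2" using assms(2) unfolding u_def by (intro power_mono) auto
  finally have norm_u: "Re u ^ 2 + Im u ^ 2 \<le> N / 2" using assms(3) by simp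
  have "cmod (1 - u / N) ^ 2 = (1 - Re u / N) ^ 2 + (Im u / N) ^ 2"
    by (simp add: cmod_power2 Re_divide_of_real Im_divide_of_real)
  also have "\<dots> = 1 - 2 * Re u / N + (Re u ^ 2 + Im u ^ 2) / N^2"
    using N by (simp add: field_simps power2_eq_square)
  also have "\<dots> \<le> 1 - 2 * (3/4) / N + (N/2) / N^2"
    using Re_u norm_u N by (intro add_mono diff_mono divide_right_mono divide_left_mono) auto
  also have "\<dots> = 1 - 1 / N" using N by (simp add: field_simps power2_eq_square)
  finally show ?thesis unfolding u_def .
qed

lemma poly_small_on_strip_large_at_sqrt_neg2:
  assumes "compact K" "\<And>z. z \<in> K \<Longrightarrow> \<bar>Im z\<bar> < 1/2" "\<epsilon> > 0"
  obtains p :: "complex poly"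
    where "\<And>z. z \<in> K \<Longrightarrow> cmod (poly p z) < \<epsilon>" "\<And>w. w^2 = -2 \<Longrightarrow> cmod (poly p w) \<ge> 1"
proof -
  obtain R where R: "\<And>z. z \<in> K \<Longrightarrow> cmod z \<le> R"
    using compact_imp_bounded[OF assms(1)] unfolding bounded_iff by blast
  define N :: real where "N = 2 * (1 + R^2)^2 + 1"
  have "0 < (1 + R^2)^2" by (intro zero_less_power add_pos_nonneg) auto
  then have N: "N > 1" unfolding N_def by simp
  obtain j where j: "(1 - 1/N) ^ j < \<epsilon>"
    using real_arch_pow_inv[OF assms(3), of "1 - 1/N"] N by auto
  define q :: "complex poly" where "q = [:1 - 1/N, 0, - 1/N:]"
  have q: "poly q z = 1 - (1 + z^2) / N" for z
    by (simp add: q_def diff_divide_distrib add_divide_distrib power2_eq_square)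
  show thesis
  proof (rule that[of "q ^ (2 * j)"])
    fix z
    assume z: "z \<in> K"
    have "cmod (1 + z^2) \<le> 1 + R^2"
      using norm_triangle_ineq[of 1 "z^2"] power_mono[OF R[OF z], of 2] by (simp add: norm_power)
    then have "cmod (poly q z) ^ 2 \<le> 1 - 1/N"
      unfolding q using N_def by (intro norm_one_minus_div_le_on_strip assms(2) z) auto
    then have "cmod (poly (q ^ (2 * j)) z) \<le> (1 - 1/N) ^ j"
      unfolding poly_power norm_power power_mult by (intro power_mono) auto
    then show "cmod (poly (q ^ (2 * j)) z) < \<epsilon>" using j by simp
  next
    fix w :: complex
    assume "w^2 = -2"
    then have "poly q w = complex_of_real (1 + 1/N)" by (simp add: q)
    then have "cmod (poly q w) = \<bar>1 + 1/N\<bar>" by (simp only: norm_of_real)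
    then have "cmod (poly q w) = 1 + 1/N" using N by simp
    then show "cmod (poly (q ^ (2 * j)) w) \<ge> 1"
      using N by (simp add: poly_power norm_power one_le_power)
  qed
qed

lemma exp_mult_real_square_eq_neg2:
  fixes a :: complex
  assumes "a \<notin> \<real>"
  obtains t x0 :: real where "t \<ge> 0" "(exp (a * t) * x0)^2 = -2"
proof -
  have "Im a \<noteq> 0" using assms complex_is_Real_iff by blast
  define t where "t = pi / (2 * \<bar>Im a\<bar>)"
  have "Im a * t = pi / 2 \<or> Im a * t = - (pi / 2)"
    using \<open>Im a \<noteq> 0\<close> by (cases "Im a > 0") (auto simp: t_def field_simps)
  then have "cis (Im a * t) ^ 2 = -1"
    by (elim disjE) (simp_all only: cis_pi_half cis_minus_pi_half power2_minus power2_i)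
  then have "exp (a * t) ^ 2 = - complex_of_real (exp (Re a * t) ^ 2)"
    by (simp add: exp_eq_polar power_mult_distrib)
  then have "(exp (a * t) * (sqrt 2 * exp (- Re a * t)))^2 =
      - complex_of_real (exp (Re a * t) ^ 2 * (sqrt 2 * exp (- Re a * t)) ^ 2)"
    by (simp add: power_mult_distrib flip: of_real_power)
  also have "\<dots> = -2" by (simp add: power_mult_distrib exp_minus field_simps)
  finally have "(exp (a * t) * (sqrt 2 * exp (- Re a * t)))^2 = -2" .
  moreover have "t \<ge> 0" by (simp add: t_def)
  ultimately show thesis by (intro that[of t "sqrt 2 * exp (- Re a * t)"]) auto
qed

context euler_C0_semigroup
begin

lemma coefficient_real: "a \<in> \<real>"
proof (rule ccontr)
  assume "a \<notin> \<real>"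
  then obtain t x0 :: real where t: "t \<ge> 0" and x0: "(exp (a * t) * x0)^2 = -2"
    by (rule exp_mult_real_square_eq_neg2)
  define e where "e = cmod (exp (b * t))"
  have "AR_zero_nbhd {f \<in> AR. cmod (f x0) < e}" by (simp add: AR_zero_nbhd_point_eval e_def)
  then obtain W where W: "AR_zero_nbhd W" and WT: "\<And>h. h \<in> W \<Longrightarrow> T t h \<in> {f \<in> AR. cmod (f x0) < e}"
    using AR_continuous_linear_zero_nbhd[OF continuous_linear[OF t]] by blast
  define S where "S = {z. \<bar>Im z\<bar> < 1/2}"
  have "open S" unfolding S_def by (intro open_Collect_less continuous_intros)
  moreover have "range complex_of_real \<subseteq> S" by (auto simp: S_def)
  ultimately obtain K \<epsilon> where K: "compact K" "K \<subseteq> S" "\<epsilon> > 0" and KW: "\<And>g. g holomorphic_on S \<Longrightarrow>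
      (\<forall>z\<in>K. cmod (g z) < \<epsilon>) \<Longrightarrow> (\<lambda>x. g (complex_of_real x)) \<in> W"
    using AR_zero_nbhdE[OF W] by blast
  have "\<And>z. z \<in> K \<Longrightarrow> \<bar>Im z\<bar> < 1/2" using K(2) by (auto simp: S_def)
  then obtain p where pK: "\<And>z. z \<in> K \<Longrightarrow> cmod (poly p z) < \<epsilon>"
    and p_sqrt: "\<And>w. w^2 = -2 \<Longrightarrow> cmod (poly p w) \<ge> 1"
    using poly_small_on_strip_large_at_sqrt_neg2[OF K(1) _ K(3)] by blast
  have "poly p holomorphic_on S" by (intro holomorphic_intros)
  then have "(\<lambda>x. poly p (complex_of_real x)) \<in> W" using pK by (intro KW) auto
  then have "cmod (T t (\<lambda>x. poly p (complex_of_real x)) x0) < e" using WT by blast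
  moreover have "cmod (T t (\<lambda>x. poly p (complex_of_real x)) x0) \<ge> e"
    using p_sqrt[OF x0] by (simp add: apply_poly[OF t] norm_mult e_def)
  ultimately show False by simp
qed

end

section \<open>The weighted dilation semigroup\<close>

lemma uniform_limit_continuous_on_Times:
  fixes H :: "'a::metric_space \<Rightarrow> 'b::metric_space \<Rightarrow> 'c::metric_space"
  assumes "continuous_on (S \<times> K) (\<lambda>p. H (fst p) (snd p))" "compact S" "compact K" "t0 \<in> S"
  shows "uniform_limit K H (H t0) (at t0 within S)"
proof (rule uniform_limitI)
  fix e :: real
  assume "e > 0"
  have "uniformly_continuous_on (S \<times> K) (\<lambda>p. H (fst p) (snd p))"
    using assms by (intro compact_uniformly_continuous compact_Times)
  then obtain d where "d > 0" and d: "\<And>p p'. p \<in> S \<times> K \<Longrightarrow> p' \<in> S \<times> K \<Longrightarrow> dist p' p < d \<Longrightarrow>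
      dist (H (fst p') (snd p')) (H (fst p) (snd p)) < e"
    unfolding uniformly_continuous_on_def using \<open>e > 0\<close> by blast
  have "dist (H t z) (H t0 z) < e" if "t \<in> S" "dist t t0 < d" "z \<in> K" for t z
    using d[of "(t0, z)" "(t, z)"] that assms(4) by (simp add: dist_Pair_Pair)
  then show "\<forall>\<^sub>F t in at t0 within S. \<forall>z\<in>K. dist (H t z) (H t0 z) < e"
    unfolding eventually_at using \<open>d > 0\<close> by blast
qed

lemma uniform_limit_difference_quotient:
  fixes F D :: "real \<Rightarrow> 'a::metric_space \<Rightarrow> complex"
  assumes "compact K" "continuous_on ({0..1} \<times> K) (\<lambda>p. D (fst p) (snd p))"
    and der: "\<And>s z. s \<in> {0..1} \<Longrightarrow> z \<in> K \<Longrightarrow> ((\<lambda>s. F s z) has_vector_derivative D s z) (at s within {0..1})"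
  shows "uniform_limit K (\<lambda>h z. (F h z - F 0 z) / complex_of_real h) (D 0) (at_right 0)"
proof (rule uniform_limitI)
  fix e :: real
  assume "e > 0"
  have "uniform_limit K D (D 0) (at_right 0)"
    using uniform_limit_continuous_on_Times[OF assms(2) compact_Icc assms(1), of 0]
    by (simp add: at_within_Icc_at_right)
  from uniform_limitD[OF this, of "e / 2"] \<open>e > 0\<close>
  obtain \<delta> where "\<delta> > 0" and \<delta>: "\<And>s z. 0 < s \<Longrightarrow> s < \<delta> \<Longrightarrow> z \<in> K \<Longrightarrow> norm (D s z - D 0 z) < e / 2"
    unfolding eventually_at_right_field by (auto simp: dist_norm)
  have "norm ((F h z - F 0 z) / complex_of_real h - D 0 z) < e"
    if h: "0 < h" "h < min \<delta> 1" and z: "z \<in> K" for h z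
  proof -
    have "norm (F h z - F 0 z - (h - 0) *\<^sub>R D 0 z) \<le> norm (h - 0) * (e / 2)"
    proof (rule vector_differentiable_bound_linearization[where S = "{0..h}" and f' = "\<lambda>s. D s z"])
      fix s
      assume s: "s \<in> {0..h}"
      then show "((\<lambda>s. F s z) has_vector_derivative D s z) (at s within {0..h})"
        using der[of s z] h z by (auto intro: has_vector_derivative_within_subset)
      show "norm (D s z - D 0 z) \<le> e / 2"
        using \<delta>[of s z] s h z \<open>e > 0\<close> by (cases "s = 0") auto
    qed (use h in \<open>auto simp: closed_segment_eq_real_ivl\<close>)
    then have "norm ((F h z - F 0 z) / complex_of_real h - D 0 z) \<le> e / 2"
      using h by (simp add: scaleR_conv_of_real norm_divide divide_le_eq field_simps)
    then show ?thesis using \<open>e > 0\<close> by simp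
  qed
  then show "\<forall>\<^sub>F h in at_right 0. \<forall>z\<in>K. dist ((F h z - F 0 z) / complex_of_real h) (D 0 z) < e"
    unfolding eventually_at_right_field using \<open>\<delta> > 0\<close>
    by (intro exI[of _ "min \<delta> 1"]) (auto simp: dist_norm)
qed

definition dilation_semigroup :: "real \<Rightarrow> complex \<Rightarrow> real \<Rightarrow> (real \<Rightarrow> complex) \<Rightarrow> real \<Rightarrow> complex" where
  "dilation_semigroup r b t f = (\<lambda>x. exp (b * t) * f (exp (r * t) * x))"

definition dilation_domain :: "real \<Rightarrow> real set \<Rightarrow> complex set \<Rightarrow> complex set" where
  "dilation_domain r S U = {z. \<forall>s\<in>S. complex_of_real (exp (r * s)) * z \<in> U}"

lemma open_dilation_domain:
  assumes "compact S" "open U"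
  shows "open (dilation_domain r S U)"
proof -
  define C where "C = (\<lambda>p::real \<times> complex. complex_of_real (exp (r * fst p)) * snd p) -` (- U)"
  have "closed C"
    unfolding C_def using assms(2) by (intro continuous_closed_vimage) (auto intro!: continuous_intros)
  then have "closed {z. \<exists>s. s \<in> S \<and> (s, z) \<in> C}"
    by (intro closed_compact_projection[OF assms(1)])
  moreover have "- dilation_domain r S U = {z. \<exists>s. s \<in> S \<and> (s, z) \<in> C}"
    by (auto simp: C_def dilation_domain_def)
  ultimately have "closed (- dilation_domain r S U)" by simp
  then show ?thesis by (simp add: closed_def)
qed

lemma real_line_subset_dilation_domain:
  assumes "range complex_of_real \<subseteq> U"
  shows "range complex_of_real \<subseteq> dilation_domain r S U"
  using assms by (auto simp: dilation_domain_def simp flip: of_real_mult)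

lemma holomorphic_on_dilation:
  assumes "g holomorphic_on U" "t \<in> S"
  shows "(\<lambda>z. exp (b * t) * g (complex_of_real (exp (r * t)) * z)) holomorphic_on dilation_domain r S U"
proof -
  have "(g \<circ> (\<lambda>z. complex_of_real (exp (r * t)) * z)) holomorphic_on dilation_domain r S U"
    using assms by (intro holomorphic_on_compose_gen[OF _ assms(1)])
      (auto intro!: holomorphic_intros simp: dilation_domain_def)
  then show ?thesis by (auto intro!: holomorphic_intros simp: o_def)
qed

lemma dilation_semigroup_restriction:
  "dilation_semigroup r b t (\<lambda>x. g (complex_of_real x)) =
    (\<lambda>x. exp (b * t) * g (complex_of_real (exp (r * t)) * complex_of_real x))"
  by (simp add: dilation_semigroup_def)

lemma AR_dilation_semigroup:
  assumes "f \<in> AR"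
  shows "dilation_semigroup r b t f \<in> AR"
proof -
  obtain U g where U: "open U" "range complex_of_real \<subseteq> U" "g holomorphic_on U"
    and f: "f = (\<lambda>x. g (complex_of_real x))"
    using AR_holomorphic_extension[OF assms] .
  show ?thesis
    unfolding f dilation_semigroup_restriction
    using U open_dilation_domain[of "{t}" U r] real_line_subset_dilation_domain[of U r "{t}"]
    by (intro AR_holomorphic_restriction[of "dilation_domain r {t} U"] holomorphic_on_dilation) auto
qed

lemma dilation_semigroup_linear:
  "dilation_semigroup r b t (\<lambda>x. u * f x + v * g x) =
    (\<lambda>x. u * dilation_semigroup r b t f x + v * dilation_semigroup r b t g x)"
  by (simp add: dilation_semigroup_def algebra_simps)

lemma AR_zero_nbhdE_dilation:
  assumes V: "AR_zero_nbhd V" and U: "open U" "range complex_of_real \<subseteq> U"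
  obtains K \<epsilon> where "compact K" "K \<subseteq> U" "\<epsilon> > 0"
    "\<And>g. g holomorphic_on U \<Longrightarrow> (\<forall>z\<in>K. cmod (g z) < \<epsilon>) \<Longrightarrow>
      dilation_semigroup r b t (\<lambda>x. g (complex_of_real x)) \<in> V"
proof -
  define c where "c = complex_of_real (exp (r * t))"
  define eb where "eb = cmod (exp (b * t))"
  have eb: "eb > 0" by (simp add: eb_def)
  have "open (dilation_domain r {t} U)" "range complex_of_real \<subseteq> dilation_domain r {t} U"
    using U by (simp_all add: open_dilation_domain real_line_subset_dilation_domain)
  then obtain K \<epsilon> where K: "compact K" "K \<subseteq> dilation_domain r {t} U" "\<epsilon> > 0"
    and KV: "\<And>g. g holomorphic_on dilation_domain r {t} U \<Longrightarrow>
      (\<forall>z\<in>K. cmod (g z) < \<epsilon>) \<Longrightarrow> (\<lambda>x. g (complex_of_real x)) \<in> V"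
    by (rule AR_zero_nbhdE[OF V]) blast
  show thesis
  proof (rule that[of "(\<lambda>z. c * z) ` K" "\<epsilon> / eb"])
    show "compact ((\<lambda>z. c * z) ` K)"
      using K(1) by (intro compact_continuous_image) (auto intro!: continuous_intros)
    show "(\<lambda>z. c * z) ` K \<subseteq> U" using K(2) by (auto simp: dilation_domain_def c_def)
    show "\<epsilon> / eb > 0" using K(3) eb by simp
  next
    fix g
    assume g: "g holomorphic_on U" "\<forall>z\<in>(\<lambda>z. c * z) ` K. cmod (g z) < \<epsilon> / eb"
    show "dilation_semigroup r b t (\<lambda>x. g (complex_of_real x)) \<in> V"
      unfolding dilation_semigroup_restriction c_def[symmetric]
    proof (rule KV)
      show "(\<lambda>z. exp (b * t) * g (c * z)) holomorphic_on dilation_domain r {t} U"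
        unfolding c_def using g(1) by (rule holomorphic_on_dilation) simp
      show "\<forall>z\<in>K. cmod (exp (b * t) * g (c * z)) < \<epsilon>"
      proof
        fix z
        assume "z \<in> K"
        then have "cmod (g (c * z)) < \<epsilon> / eb" using g(2) by blast
        then have "eb * cmod (g (c * z)) < \<epsilon>" using eb by (simp add: field_simps)
        then show "cmod (exp (b * t) * g (c * z)) < \<epsilon>" by (simp add: norm_mult eb_def)
      qed
    qed
  qed
qed

lemma AR_zero_nbhd_dilation_preimage:
  assumes V: "AR_zero_nbhd V"
  shows "AR_zero_nbhd {h \<in> AR. dilation_semigroup r b t h \<in> V}"
  unfolding AR_zero_nbhd_def
proof (intro conjI ballI allI impI)
  fix h1 h2 and u :: real
  assume h1: "h1 \<in> {h \<in> AR. dilation_semigroup r b t h \<in> V}"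
    and h2: "h2 \<in> {h \<in> AR. dilation_semigroup r b t h \<in> V}" and u: "0 \<le> u \<and> u \<le> 1"
  have "(\<lambda>x. complex_of_real u * dilation_semigroup r b t h1 x +
      complex_of_real (1 - u) * dilation_semigroup r b t h2 x) \<in> V"
    using h1 h2 u by (intro AR_zero_nbhd_convex[OF V]) auto
  moreover have "(\<lambda>x. complex_of_real u * h1 x + complex_of_real (1 - u) * h2 x) \<in> AR"
    using h1 h2 by (intro AR_add AR_cmult) auto
  ultimately show "(\<lambda>x. complex_of_real u * h1 x + complex_of_real (1 - u) * h2 x) \<in>
      {h \<in> AR. dilation_semigroup r b t h \<in> V}"
    by (simp only: mem_Collect_eq dilation_semigroup_linear)
next
  fix h and c :: complex
  assume "h \<in> {h \<in> AR. dilation_semigroup r b t h \<in> V}" "cmod c \<le> 1"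
  moreover have "dilation_semigroup r b t (\<lambda>x. c * h x) = (\<lambda>x. c * dilation_semigroup r b t h x)"
    by (simp add: dilation_semigroup_def algebra_simps)
  ultimately show "(\<lambda>x. c * h x) \<in> {h \<in> AR. dilation_semigroup r b t h \<in> V}"
    by (auto intro!: AR_cmult AR_zero_nbhd_balanced[OF V])
next
  fix U :: "complex set"
  assume U: "open U \<and> range complex_of_real \<subseteq> U"
  then have "open U" "range complex_of_real \<subseteq> U" by simp_all
  then obtain K \<epsilon> where K: "compact K" "K \<subseteq> U" "\<epsilon> > 0"
    and KV: "\<And>g. g holomorphic_on U \<Longrightarrow> (\<forall>z\<in>K. cmod (g z) < \<epsilon>) \<Longrightarrow>
      dilation_semigroup r b t (\<lambda>x. g (complex_of_real x)) \<in> V"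
    by (rule AR_zero_nbhdE_dilation[OF V]) blast
  have "(\<lambda>x. g (complex_of_real x)) \<in> {h \<in> AR. dilation_semigroup r b t h \<in> V}"
    if "g holomorphic_on U" "\<forall>z\<in>K. cmod (g z) < \<epsilon>" for g
    using that U KV[OF that] AR_holomorphic_restriction[of U g] by simp
  with K show "\<exists>K \<epsilon>. compact K \<and> K \<subseteq> U \<and> 0 < \<epsilon> \<and>
      (\<forall>g. g holomorphic_on U \<and> (\<forall>z\<in>K. cmod (g z) < \<epsilon>) \<longrightarrow>
        (\<lambda>x. g (complex_of_real x)) \<in> {h \<in> AR. dilation_semigroup r b t h \<in> V})"
    by blast
qed auto

lemma AR_continuous_linear_dilation_semigroup: "AR_continuous_linear (dilation_semigroup r b t)"
  unfolding AR_continuous_linear_def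
proof (intro conjI ballI allI impI)
  fix f V
  assume "AR_zero_nbhd V"
  moreover have "(\<lambda>x. dilation_semigroup r b t (\<lambda>y. f y + h y) x - dilation_semigroup r b t f x) =
      dilation_semigroup r b t h" for h
    by (simp add: dilation_semigroup_def algebra_simps)
  ultimately show "\<exists>W. AR_zero_nbhd W \<and> (\<forall>h\<in>W.
      (\<lambda>x. dilation_semigroup r b t (\<lambda>y. f y + h y) x - dilation_semigroup r b t f x) \<in> V)"
    by (intro exI[of _ "{h \<in> AR. dilation_semigroup r b t h \<in> V}"])
      (auto intro: AR_zero_nbhd_dilation_preimage)
qed (rule AR_dilation_semigroup, assumption | simp add: dilation_semigroup_def algebra_simps)+

lemma dilation_semigroup_add:
  "dilation_semigroup r b t (dilation_semigroup r b s f) = dilation_semigroup r b (t + s) f"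
  by (simp add: dilation_semigroup_def exp_add algebra_simps)

lemma dilation_semigroup_0: "dilation_semigroup r b 0 f = f"
  by (simp add: dilation_semigroup_def)

lemma continuous_on_dilation:
  assumes "g holomorphic_on U" "K \<subseteq> dilation_domain r S U"
  shows "continuous_on (S \<times> K) (\<lambda>p. g (complex_of_real (exp (r * fst p)) * snd p))"
proof (rule continuous_on_compose2[OF holomorphic_on_imp_continuous_on[OF assms(1)]])
  show "continuous_on (S \<times> K) (\<lambda>p. complex_of_real (exp (r * fst p)) * snd p)"
    by (intro continuous_intros)
  show "(\<lambda>p. complex_of_real (exp (r * fst p)) * snd p) ` (S \<times> K) \<subseteq> U"
    using assms(2) by (auto simp: dilation_domain_def)
qed

lemma AR_tendsto_dilation_semigroup:
  assumes "f \<in> AR"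
  shows "AR_tendsto (\<lambda>t. dilation_semigroup r b t f) (dilation_semigroup r b t0 f) (at t0 within {0..})"
proof -
  obtain U g where U: "open U" "range complex_of_real \<subseteq> U" "g holomorphic_on U"
    and f: "f = (\<lambda>x. g (complex_of_real x))"
    using AR_holomorphic_extension[OF assms] .
  define S where "S = {t0 - 1 .. t0 + 1}"
  define H where "H = (\<lambda>t z. exp (b * t) * g (complex_of_real (exp (r * t)) * z))"
  have S: "compact S" "t0 \<in> S" "t0 \<in> interior S" by (auto simp: S_def)
  show ?thesis
  proof (rule AR_tendsto_if_uniform_limit_on_compacts[where G = H])
    show "open (dilation_domain r S U)" "range complex_of_real \<subseteq> dilation_domain r S U"
      using U S by (simp_all add: open_dilation_domain real_line_subset_dilation_domain)
    show "H t0 holomorphic_on dilation_domain r S U"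
      unfolding H_def using U(3) S(2) by (rule holomorphic_on_dilation)
    have "eventually (\<lambda>t. t \<in> S) (at t0 within {0..})"
      unfolding eventually_at S_def by (intro exI[of _ 1]) (auto simp: dist_real_def)
    then show "eventually (\<lambda>t. H t holomorphic_on dilation_domain r S U \<and>
        dilation_semigroup r b t f = (\<lambda>x. H t (complex_of_real x))) (at t0 within {0..})"
      by eventually_elim (simp add: H_def f dilation_semigroup_restriction holomorphic_on_dilation[OF U(3)])
    show "dilation_semigroup r b t0 f = (\<lambda>x. H t0 (complex_of_real x))"
      by (simp add: H_def f dilation_semigroup_restriction)
  next
    fix K
    assume "compact K" "K \<subseteq> dilation_domain r S U"
    then have "continuous_on (S \<times> K) (\<lambda>p. H (fst p) (snd p))"
      unfolding H_def using continuous_on_dilation[OF U(3)] by (intro continuous_intros) simp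
    from uniform_limit_continuous_on_Times[OF this S(1) \<open>compact K\<close> S(2)]
    have "uniform_limit K H (H t0) (at t0)" unfolding at_within_interior[OF S(3)] .
    then show "uniform_limit K H (H t0) (at t0 within {0..})"
      by (rule filterlim_mono[OF _ order_refl at_le]) simp
  qed
qed

lemma has_vector_derivative_dilation:
  fixes g :: "complex \<Rightarrow> complex" and b z :: complex
  assumes "g holomorphic_on U" "open U" "complex_of_real (exp (r * s)) * z \<in> U"
  shows "((\<lambda>s. exp (b * s) * g (complex_of_real (exp (r * s)) * z)) has_vector_derivative
      exp (b * s) * (b * g (complex_of_real (exp (r * s)) * z) +
        complex_of_real (r * exp (r * s)) * z * deriv g (complex_of_real (exp (r * s)) * z)))
      (at s within T)"
proof -
  have ex: "complex_of_real (exp (r * w)) = exp (r * complex_of_real w)" for w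
    by (simp add: of_real_exp)
  have outer: "(g has_field_derivative deriv g (exp (r * complex_of_real s) * z))
      (at (exp (r * complex_of_real s) * z))"
    using holomorphic_derivI[OF assms] by (simp add: ex)
  have inner: "((\<lambda>w. exp (r * w) * z) has_field_derivative r * exp (r * complex_of_real s) * z)
      (at (complex_of_real s))"
    by (auto intro!: derivative_eq_intros)
  from DERIV_chain2[OF outer inner]
  have chain: "((\<lambda>w. g (exp (r * w) * z)) has_field_derivative
      deriv g (exp (r * complex_of_real s) * z) * (r * exp (r * complex_of_real s) * z))
      (at (complex_of_real s))" .
  have exp_b: "((\<lambda>w. exp (b * w)) has_field_derivative b * exp (b * complex_of_real s))
      (at (complex_of_real s))"
    by (auto intro!: derivative_eq_intros)
  have "((\<lambda>w. exp (b * w) * g (exp (r * w) * z)) has_field_derivative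
      exp (b * s) * (b * g (exp (r * complex_of_real s) * z) +
        r * exp (r * complex_of_real s) * z * deriv g (exp (r * complex_of_real s) * z)))
      (at (complex_of_real s))"
    by (rule DERIV_cong[OF DERIV_mult[OF exp_b chain]]) (simp add: algebra_simps)
  from has_vector_derivative_real_field[OF this] show ?thesis by (simp add: ex)
qed

lemma uniform_limit_dilation_difference_quotient:
  fixes g :: "complex \<Rightarrow> complex"
  assumes g: "g holomorphic_on U" "open U" and K: "compact K" "K \<subseteq> dilation_domain r {0..1} U"
  shows "uniform_limit K
    (\<lambda>h z. (exp (b * h) * g (complex_of_real (exp (r * h)) * z) - g z) / complex_of_real h)
    (\<lambda>z. r * z * deriv g z + b * g z) (at_right 0)"
proof -
  define F :: "real \<Rightarrow> complex \<Rightarrow> complex" where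
    "F = (\<lambda>s z. exp (b * s) * g (complex_of_real (exp (r * s)) * z))"
  define D :: "real \<Rightarrow> complex \<Rightarrow> complex" where
    "D = (\<lambda>s z. exp (b * s) * (b * g (complex_of_real (exp (r * s)) * z) +
      complex_of_real (r * exp (r * s)) * z * deriv g (complex_of_real (exp (r * s)) * z)))"
  have "uniform_limit K (\<lambda>h z. (F h z - F 0 z) / complex_of_real h) (D 0) (at_right 0)"
  proof (rule uniform_limit_difference_quotient[OF K(1)])
    have "deriv g holomorphic_on U" using g by (rule holomorphic_deriv)
    then show "continuous_on ({0..1} \<times> K) (\<lambda>p. D (fst p) (snd p))"
      unfolding D_def using continuous_on_dilation[OF g(1) K(2)] continuous_on_dilation[of "deriv g" U K r]
        K(2) by (intro continuous_intros) auto
    fix s :: real and z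
    assume "s \<in> {0..1}" "z \<in> K"
    then have "complex_of_real (exp (r * s)) * z \<in> U" using K(2) by (auto simp: dilation_domain_def)
    then show "((\<lambda>s. F s z) has_vector_derivative D s z) (at s within {0..1})"
      unfolding F_def D_def by (rule has_vector_derivative_dilation[OF g])
  qed
  then show ?thesis by (simp add: F_def D_def algebra_simps)
qed

lemma AR_tendsto_dilation_semigroup_generator:
  assumes "f \<in> AR"
  shows "AR_tendsto (\<lambda>h x. (dilation_semigroup r b h f x - f x) / complex_of_real h) (euler_op r b f)
    (at_right 0)"
proof -
  obtain U g where U: "open U" "range complex_of_real \<subseteq> U" "g holomorphic_on U"
    and f: "f = (\<lambda>x. g (complex_of_real x))"
    using AR_holomorphic_extension[OF assms] .
  define W where "W = dilation_domain r {0..1} U"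
  have W: "open W" "range complex_of_real \<subseteq> W" "W \<subseteq> U"
    using U open_dilation_domain[of "{0..1}" U r] real_line_subset_dilation_domain[of U r "{0..1}"]
    by (auto simp: W_def dilation_domain_def dest: bspec[of _ _ 0])
  have g: "g holomorphic_on W" "deriv g holomorphic_on W"
    using holomorphic_on_subset[OF _ W(3)] U holomorphic_deriv by auto
  show ?thesis
  proof (rule AR_tendsto_if_uniform_limit_on_compacts[OF W(1,2)])
    show "(\<lambda>z. r * z * deriv g z + b * g z) holomorphic_on W"
      using g W(1) by (auto intro!: holomorphic_intros)
    show "euler_op r b f = (\<lambda>x. r * complex_of_real x * deriv g x + b * g x)"
      by (simp add: euler_op_def f AR_vector_derivative[OF U])
    have "(\<lambda>z. (exp (b * h) * g (complex_of_real (exp (r * h)) * z) - g z) / complex_of_real h)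
        holomorphic_on W" if "0 < h" "h < 1" for h
      using that holomorphic_on_dilation[OF U(3), of h "{0..1}" b r] g(1)
      by (auto intro!: holomorphic_intros simp: W_def)
    then show "eventually (\<lambda>h.
        (\<lambda>z. (exp (b * h) * g (complex_of_real (exp (r * h)) * z) - g z) / complex_of_real h)
        holomorphic_on W \<and> (\<lambda>x. (dilation_semigroup r b h f x - f x) / complex_of_real h) =
        (\<lambda>x. (exp (b * h) * g (complex_of_real (exp (r * h)) * x) - g x) / complex_of_real h)) (at_right 0)"
      unfolding eventually_at_right_field
      by (intro exI[of _ 1]) (auto simp: f dilation_semigroup_restriction)
  next
    fix K
    assume "compact K" "K \<subseteq> W"
    then show "uniform_limit K
        (\<lambda>h z. (exp (b * h) * g (complex_of_real (exp (r * h)) * z) - g z) / complex_of_real h)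
        (\<lambda>z. r * z * deriv g z + b * g z) (at_right 0)"
      unfolding W_def by (rule uniform_limit_dilation_difference_quotient[OF U(3,1)])
  qed
qed

lemma C0_semigroup_dilation_semigroup: "C0_semigroup (dilation_semigroup r b)"
  unfolding C0_semigroup_def
  by (simp add: AR_continuous_linear_dilation_semigroup dilation_semigroup_add dilation_semigroup_0
      AR_tendsto_dilation_semigroup)

lemma generates_C0_euler_op_of_real: "generates_C0 (euler_op (complex_of_real r) b)"
  unfolding generates_C0_def
  using C0_semigroup_dilation_semigroup AR_tendsto_dilation_semigroup_generator by blast

theorem mainTheorem6:
  fixes a b :: complex
  shows "generates_C0 (euler_op a b) \<longleftrightarrow> a \<in> \<real>"
proof
  assume "generates_C0 (euler_op a b)"
  then obtain T where "C0_semigroup T"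
    and "\<forall>f\<in>AR. AR_tendsto (\<lambda>t x. (T t f x - f x) / complex_of_real t) (euler_op a b f) (at_right 0)"
    unfolding generates_C0_def by blast
  then interpret euler_C0_semigroup T a b by unfold_locales auto
  show "a \<in> \<real>" by (rule coefficient_real)
next
  assume "a \<in> \<real>"
  then show "generates_C0 (euler_op a b)" by (auto elim: Reals_cases intro: generates_C0_euler_op_of_real)
qed

end
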